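(* Let $(\mathfrak{g},[\cdot,\cdot]_{\mathfrak{g}})$ be a Leibniz algebra, $(V;\rho^L,\rho^R)$ a representation, $T$ a relative Rota-Baxter operator, and $x\in\mathfrak{g}$ a Nijenhuis element associated to $T$. Then $\rho^L(x)$ is a Nijenhuis operator on the Leibniz algebra $(V,[\cdot,\cdot]_T)$, where $[u,v]_T=\rho^L(Tu)v+\rho^R(Tv)u$.
   Context: A Leibniz algebra is a vector space $\mathfrak{g}$ with bilinear $[\cdot,\cdot]_{\mathfrak{g}}$ satisfying $[x,[y,z]_{\mathfrak{g}}]_{\mathfrak{g}}=[[x,y]_{\mathfrak{g}},z]_{\mathfrak{g}}+[y,[x,z]_{\mathfrak{g}}]_{\mathfrak{g}}$. A representation $(V;\rho^L,\rho^R)$: linear $\rho^L,\rho^R:\mathfrak{g}\to\mathfrak{gl}(V)$ with $\rho^L([x,y]_{\mathfrak{g}})=[\rho^L(x),\rho^L(y)]$, $\rho^R([x,y]_{\mathfrak{g}})=[\rho^L(x),\rho^R(y)]$, $\rho^R(y)\rho^L(x)=-\rho^R(y)\rho^R(x)$. A relative Rota-Baxter operator is a linear $T:V\to\mathfrak{g}$ with $[Tv_1,Tv_2]_{\mathfrak{g}}=T(\rho^L(Tv_1)v_2+\rho^R(Tv_2)v_1)$; $(V,[\cdot,\cdot]_T)$ is then a Leibniz algebra. An element $x\in\mathfrak{g}$ is a Nijenhuis element associated to $T$ if for all $y,z\in\mathfrak{g}$, $u\in V$: $[[x,y]_{\mathfrak{g}},[x,z]_{\mathfrak{g}}]_{\mathfrak{g}}=0$,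 $\rho^L([x,y]_{\mathfrak{g}})\rho^L(x)=0$, $\rho^R([x,y]_{\mathfrak{g}})\rho^L(x)=0$, and $[x,T\rho^L(x)u-[x,Tu]_{\mathfrak{g}}]_{\mathfrak{g}}=0$. A Nijenhuis operator on a Leibniz algebra $(A,[\cdot,\cdot])$ is a linear $N:A\to A$ with $[Na,Nb]=N([Na,b]+[a,Nb]-N[a,b])$ for all $a,b\in A$. *)

theory Defs
  imports "HOL-Analysis.Analysis"
begin

definition bilinear_map ::
  "('k::field \<Rightarrow> 'a::ab_group_add \<Rightarrow> 'a) \<Rightarrow> ('k \<Rightarrow> 'b::ab_group_add \<Rightarrow> 'b) \<Rightarrow>
   ('k \<Rightarrow> 'c::ab_group_add \<Rightarrow> 'c) \<Rightarrow> ('a \<Rightarrow> 'b \<Rightarrow> 'c) \<Rightarrow> bool" where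
  "bilinear_map sa sb sc f \<longleftrightarrow>
     (\<forall>x. Vector_Spaces.linear sb sc (f x)) \<and> (\<forall>y. Vector_Spaces.linear sa sc (\<lambda>x. f x y))"

definition leibniz_algebra ::
  "('k::field \<Rightarrow> 'g::ab_group_add \<Rightarrow> 'g) \<Rightarrow> ('g \<Rightarrow> 'g \<Rightarrow> 'g) \<Rightarrow> bool" where
  "leibniz_algebra sg br \<longleftrightarrow>
     Vector_Spaces.vector_space sg \<and> bilinear_map sg sg sg br \<and>
     (\<forall>x y z. br x (br y z) = br (br x y) z + br y (br x z))"

definition comm_op :: "('v \<Rightarrow> 'v::ab_group_add) \<Rightarrow> ('v \<Rightarrow> 'v) \<Rightarrow> 'v \<Rightarrow> 'v" where
  "comm_op A B = (\<lambda>v. A (B v) - B (A v))"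

definition leibniz_rep ::
  "('k::field \<Rightarrow> 'g::ab_group_add \<Rightarrow> 'g) \<Rightarrow> ('g \<Rightarrow> 'g \<Rightarrow> 'g) \<Rightarrow>
   ('k \<Rightarrow> 'v::ab_group_add \<Rightarrow> 'v) \<Rightarrow> ('g \<Rightarrow> 'v \<Rightarrow> 'v) \<Rightarrow> ('g \<Rightarrow> 'v \<Rightarrow> 'v) \<Rightarrow> bool" where
  "leibniz_rep sg br sv rhoL rhoR \<longleftrightarrow>
     Vector_Spaces.vector_space sv \<and>
     bilinear_map sg sv sv rhoL \<and> bilinear_map sg sv sv rhoR \<and>
     (\<forall>x y. rhoL (br x y) = comm_op (rhoL x) (rhoL y)) \<and>
     (\<forall>x y. rhoR (br x y) = comm_op (rhoL x) (rhoR y)) \<and>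
     (\<forall>x y. rhoR y \<circ> rhoL x = (\<lambda>v. - rhoR y (rhoR x v)))"

definition relative_RB ::
  "('k::field \<Rightarrow> 'g::ab_group_add \<Rightarrow> 'g) \<Rightarrow> ('g \<Rightarrow> 'g \<Rightarrow> 'g) \<Rightarrow>
   ('k \<Rightarrow> 'v::ab_group_add \<Rightarrow> 'v) \<Rightarrow> ('g \<Rightarrow> 'v \<Rightarrow> 'v) \<Rightarrow> ('g \<Rightarrow> 'v \<Rightarrow> 'v) \<Rightarrow> ('v \<Rightarrow> 'g) \<Rightarrow> bool" where
  "relative_RB sg br sv rhoL rhoR T \<longleftrightarrow>
     Vector_Spaces.linear sv sg T \<and>
     (\<forall>v1 v2. br (T v1) (T v2) = T (rhoL (T v1) v2 + rhoR (T v2) v1))"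

definition bracket_T ::
  "('g \<Rightarrow> 'v \<Rightarrow> 'v::ab_group_add) \<Rightarrow> ('g \<Rightarrow> 'v \<Rightarrow> 'v) \<Rightarrow> ('v \<Rightarrow> 'g) \<Rightarrow> 'v \<Rightarrow> 'v \<Rightarrow> 'v" where
  "bracket_T rhoL rhoR T u v = rhoL (T u) v + rhoR (T v) u"

definition nijenhuis_element ::
  "('g::ab_group_add \<Rightarrow> 'g \<Rightarrow> 'g) \<Rightarrow> ('g \<Rightarrow> 'v::ab_group_add \<Rightarrow> 'v) \<Rightarrow> ('g \<Rightarrow> 'v \<Rightarrow> 'v) \<Rightarrow>
   ('v \<Rightarrow> 'g) \<Rightarrow> 'g \<Rightarrow> bool" where
  "nijenhuis_element br rhoL rhoR T x \<longleftrightarrow>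
     (\<forall>y z. br (br x y) (br x z) = 0) \<and>
     (\<forall>y. rhoL (br x y) \<circ> rhoL x = (\<lambda>v. 0)) \<and>
     (\<forall>y. rhoR (br x y) \<circ> rhoL x = (\<lambda>v. 0)) \<and>
     (\<forall>u. br x (T (rhoL x u) - br x (T u)) = 0)"

definition nijenhuis_operator ::
  "('k::field \<Rightarrow> 'a::ab_group_add \<Rightarrow> 'a) \<Rightarrow> ('a \<Rightarrow> 'a \<Rightarrow> 'a) \<Rightarrow> ('a \<Rightarrow> 'a) \<Rightarrow> bool" where
  "nijenhuis_operator s br N \<longleftrightarrow>
     Vector_Spaces.linear s s N \<and>
     (\<forall>a b. br (N a) (N b) = N (br (N a) b + br a (N b) - N (br a b)))"

end

theory Submission
  imports Defs
begin

(* Write N = rhoL x. Both rhoL and rhoR satisfy rho([x,a]) = [N, rho(a)], so the Nijenhuis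
   defect of N for the bracket [u,v]_T splits into a rhoL-part and a rhoR-part of the same
   shape. In each part the commutation rule turns the four terms into
   rho([x,[x,T u]]) - rho([x,T(N u)]), using that rho([x,y]) vanishes on the image of N;
   this difference is zero by the last condition on a Nijenhuis element. *)

lemma bilinear_map_diff:
  assumes "bilinear_map sa sb sc f"
  shows bilinear_map_diff_right: "f a (p - q) = f a p - f a q"
    and bilinear_map_diff_left: "f (a - b) p = f a p - f b p"
  using assms module_hom.diff[OF module_hom_linearI]
  unfolding bilinear_map_def by blast+

lemma bracket_T_nijenhuis_defect:
  assumes "Vector_Spaces.linear s s N"
  shows "bracket_T rhoL rhoR T (N u) (N v)
           - N (bracket_T rhoL rhoR T (N u) v + bracket_T rhoL rhoR T u (N v)
                - N (bracket_T rhoL rhoR T u v))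
         = (rhoL (T (N u)) (N v) - N (rhoL (T (N u)) v)
              - N (rhoL (T u) (N v)) + N (N (rhoL (T u) v)))
         + (rhoR (T (N v)) (N u) - N (rhoR (T (N v)) u)
              - N (rhoR (T v) (N u)) + N (N (rhoR (T v) u)))"
proof -
  interpret module_hom s s N
    using assms by (rule module_hom_linearI)
  show ?thesis
    unfolding bracket_T_def add diff by (simp add: algebra_simps)
qed

lemma commutator_terms_vanish:
  fixes rho :: "'g \<Rightarrow> 'v::ab_group_add \<Rightarrow> 'v" and N :: "'v \<Rightarrow> 'v"
  assumes N_diff: "\<And>p q. N (p - q) = N p - N q"
    and rho_bracket: "\<And>c. rho (br x c) = comm_op N (rho c)"
    and rho_bracket_N: "\<And>c w. rho (br x c) (N w) = 0"
    and twice: "br x b = br x (br x a)"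
  shows "rho b (N w) - N (rho b w) - N (rho a (N w)) + N (N (rho a w)) = 0"
proof -
  have comm: "rho (br x c) w' = N (rho c w') - rho c (N w')" for c w'
    using rho_bracket unfolding comm_op_def by simp
  have outer: "rho b (N w) - N (rho b w) = - rho (br x (br x a)) w"
    using comm[of b w] twice by simp
  have "N (N (rho a w)) - N (rho a (N w)) = N (rho (br x a) w)"
    by (simp add: comm N_diff)
  also have "\<dots> = rho (br x (br x a)) w + rho (br x a) (N w)"
    by (simp add: comm)
  also have "\<dots> = rho (br x (br x a)) w"
    by (simp add: rho_bracket_N)
  finally have inner: "N (N (rho a w)) - N (rho a (N w)) = rho (br x (br x a)) w" .
  from outer inner show ?thesis
    by (simp add: algebra_simps)
qed

theorem proposition3p11:
  fixes sg :: "'k::field \<Rightarrow> 'g::ab_group_add \<Rightarrow> 'g"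
    and sv :: "'k \<Rightarrow> 'v::ab_group_add \<Rightarrow> 'v"
    and br :: "'g \<Rightarrow> 'g \<Rightarrow> 'g"
    and rhoL rhoR :: "'g \<Rightarrow> 'v \<Rightarrow> 'v"
    and T :: "'v \<Rightarrow> 'g"
    and x :: 'g
  assumes "leibniz_algebra sg br"
    and "leibniz_rep sg br sv rhoL rhoR"
    and "relative_RB sg br sv rhoL rhoR T"
    and "nijenhuis_element br rhoL rhoR T x"
  shows "nijenhuis_operator sv (bracket_T rhoL rhoR T) (rhoL x)"
proof -
  have br: "bilinear_map sg sg sg br"
    using assms(1) unfolding leibniz_algebra_def by blast
  have rhoL: "bilinear_map sg sv sv rhoL" "\<And>c. rhoL (br x c) = comm_op (rhoL x) (rhoL c)"
    and rhoR: "bilinear_map sg sv sv rhoR" "\<And>c. rhoR (br x c) = comm_op (rhoL x) (rhoR c)"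
    using assms(2) unfolding leibniz_rep_def by blast+
  have N_linear: "Vector_Spaces.linear sv sv (rhoL x)"
    using rhoL(1) unfolding bilinear_map_def by blast
  have kill_L: "\<And>c w. rhoL (br x c) (rhoL x w) = 0"
    and kill_R: "\<And>c w. rhoR (br x c) (rhoL x w) = 0"
    and T_condition: "\<And>u. br x (T (rhoL x u) - br x (T u)) = 0"
    using assms(4) unfolding nijenhuis_element_def by (metis comp_apply)+
  from T_condition have twice: "\<And>u. br x (T (rhoL x u)) = br x (br x (T u))"
    by (simp add: bilinear_map_diff_right[OF br])
  have N_diff: "\<And>p q. rhoL x (p - q) = rhoL x p - rhoL x q"
    by (rule bilinear_map_diff_right[OF rhoL(1)])
  note vanish_L = commutator_terms_vanish[where rho = rhoL and N = "rhoL x" and br = br and x = x,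
      OF N_diff rhoL(2) kill_L twice]
  note vanish_R = commutator_terms_vanish[where rho = rhoR and N = "rhoL x" and br = br and x = x,
      OF N_diff rhoR(2) kill_R twice]
  have "bracket_T rhoL rhoR T (rhoL x u) (rhoL x v)
          - rhoL x (bracket_T rhoL rhoR T (rhoL x u) v + bracket_T rhoL rhoR T u (rhoL x v)
                    - rhoL x (bracket_T rhoL rhoR T u v)) = 0" for u v
    unfolding bracket_T_nijenhuis_defect[OF N_linear] vanish_L vanish_R by simp
  then show ?thesis
    unfolding nijenhuis_operator_def using N_linear by (simp add: right_minus_eq)
qed

end
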